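(* Let $m,n\ge 1$, $M=\{1,\dots,m\}$, $N=\{1,\dots,n\}$. (i) For BQAP1 with data $Q=(q_{ijk\ell})$ ($m\times n\times m\times n$) and $m\times n$ matrices $c,d$, the average $\mathcal{A}_1(Q,c,d)$ of the objective value $f_1(x,y)$ over all feasible solutions equals $$\mathcal{A}_1(Q,c,d)=\frac{1}{mn}\sum_{i=1}^m\sum_{j=1}^n\sum_{k=1}^m\sum_{\ell=1}^n q_{ijk\ell}+\frac{1}{n}\sum_{i=1}^m\sum_{j=1}^n c_{ij}+\frac{1}{m}\sum_{i=1}^m\sum_{j=1}^n d_{ij}.$$ (ii) For BQAP2 with data $Q=(q_{ijk\ell})$ ($m\times m\times n\times n$), an $m\times m$ matrix $c$ and an $n\times n$ matrix $d$, the average $\mathcal{A}_2(Q,c,d)$ of $f_2(x,y)$ over all feasible solutions equals $$\mathcal{A}_2(Q,c,d)=\frac{1}{mn}\sum_{i=1}^m\sum_{j=1}^m\sum_{k=1}^n\sum_{\ell=1}^n q_{ijk\ell}+\frac{1}{m}\sum_{i=1}^m\sum_{j=1}^m c_{ij}+\frac{1}{n}\sum_{i=1}^n\sum_{j=1}^n d_{ij}.$$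
   Context: BQAP1: the feasible solutions are pairs $(x,y)$ of $m\times n$ 0-1 matrices with $\sum_{j=1}^n x_{ij}=1$ for every $i\in M$ and $\sum_{i=1}^m y_{ij}=1$ for every $j\in N$ (there are $n^m m^n$ of them); the objective is $f_1(x,y)=\sum_{i,k\in M}\sum_{j,\ell\in N} q_{ijk\ell}x_{ij}y_{k\ell}+\sum_{i\in M,j\in N}c_{ij}x_{ij}+\sum_{i\in M,j\in N}d_{ij}y_{ij}$. BQAP2: feasible solutions are pairs $(x,y)$ with $x$ an $m\times m$ 0-1 matrix satisfying $\sum_{j=1}^m x_{ij}=1$ for all $i\in M$ and $y$ an $n\times n$ 0-1 matrix satisfying $\sum_{i=1}^n y_{ij}=1$ for all $j\in N$ (there are $m^m n^n$ of them); the objective is $f_2(x,y)=\sum_{i,j\in M}\sum_{k,\ell\in N} q_{ijk\ell}x_{ij}y_{k\ell}+\sum_{i,j\in M}c_{ij}x_{ij}+\sum_{i,j\in N}d_{ij}y_{ij}$. All data are real numbers. *)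

theory Defs
  imports Complex_Main
begin

text \<open>0-1 matrices are represented as functions nat => nat => real, with entries in {0,1}
  and entries outside the index range (rows/columns starting at 1) fixed to 0, so that the
  set of feasible solutions is exactly the finite set of pairs of matrices described in the paper.\<close>

definition zero_one_matrix :: "nat \<Rightarrow> nat \<Rightarrow> (nat \<Rightarrow> nat \<Rightarrow> real) \<Rightarrow> bool" where
  "zero_one_matrix r s x \<longleftrightarrow>
     (\<forall>i j. x i j \<in> {0, 1}) \<and> (\<forall>i j. (i \<notin> {1..r} \<or> j \<notin> {1..s}) \<longrightarrow> x i j = 0)"

definition bqap1_feasible :: "nat \<Rightarrow> nat \<Rightarrow> ((nat \<Rightarrow> nat \<Rightarrow> real) \<times> (nat \<Rightarrow> nat \<Rightarrow> real)) set" where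
  "bqap1_feasible m n = {(x, y).
     zero_one_matrix m n x \<and> zero_one_matrix m n y \<and>
     (\<forall>i\<in>{1..m}. (\<Sum>j=1..n. x i j) = 1) \<and>
     (\<forall>j\<in>{1..n}. (\<Sum>i=1..m. y i j) = 1)}"

definition bqap2_feasible :: "nat \<Rightarrow> nat \<Rightarrow> ((nat \<Rightarrow> nat \<Rightarrow> real) \<times> (nat \<Rightarrow> nat \<Rightarrow> real)) set" where
  "bqap2_feasible m n = {(x, y).
     zero_one_matrix m m x \<and> zero_one_matrix n n y \<and>
     (\<forall>i\<in>{1..m}. (\<Sum>j=1..m. x i j) = 1) \<and>
     (\<forall>j\<in>{1..n}. (\<Sum>i=1..n. y i j) = 1)}"

definition bqap1_obj ::
  "nat \<Rightarrow> nat \<Rightarrow> (nat \<Rightarrow> nat \<Rightarrow> nat \<Rightarrow> nat \<Rightarrow> real) \<Rightarrow> (nat \<Rightarrow> nat \<Rightarrow> real) \<Rightarrow> (nat \<Rightarrow> nat \<Rightarrow> real)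
   \<Rightarrow> (nat \<Rightarrow> nat \<Rightarrow> real) \<Rightarrow> (nat \<Rightarrow> nat \<Rightarrow> real) \<Rightarrow> real" where
  "bqap1_obj m n q c d x y =
     (\<Sum>i=1..m. \<Sum>k=1..m. \<Sum>j=1..n. \<Sum>l=1..n. q i j k l * x i j * y k l)
     + (\<Sum>i=1..m. \<Sum>j=1..n. c i j * x i j)
     + (\<Sum>i=1..m. \<Sum>j=1..n. d i j * y i j)"

definition bqap2_obj ::
  "nat \<Rightarrow> nat \<Rightarrow> (nat \<Rightarrow> nat \<Rightarrow> nat \<Rightarrow> nat \<Rightarrow> real) \<Rightarrow> (nat \<Rightarrow> nat \<Rightarrow> real) \<Rightarrow> (nat \<Rightarrow> nat \<Rightarrow> real)
   \<Rightarrow> (nat \<Rightarrow> nat \<Rightarrow> real) \<Rightarrow> (nat \<Rightarrow> nat \<Rightarrow> real) \<Rightarrow> real" where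
  "bqap2_obj m n q c d x y =
     (\<Sum>i=1..m. \<Sum>j=1..m. \<Sum>k=1..n. \<Sum>l=1..n. q i j k l * x i j * y k l)
     + (\<Sum>i=1..m. \<Sum>j=1..m. c i j * x i j)
     + (\<Sum>i=1..n. \<Sum>j=1..n. d i j * y i j)"

definition average :: "'a set \<Rightarrow> ('a \<Rightarrow> real) \<Rightarrow> real" where
  "average S f = (\<Sum>p\<in>S. f p) / real (card S)"

end

theory Submission
  imports Defs "HOL-Combinatorics.Transposition"
begin

text \<open>The feasible set of either problem is a Cartesian product: the constraints on \<open>x\<close> and on
  \<open>y\<close> are independent. Hence the average of \<open>x\<^sub>i\<^sub>j y\<^sub>k\<^sub>l\<close> over it is the product of the separate
  averages of \<open>x\<^sub>i\<^sub>j\<close> and \<open>y\<^sub>k\<^sub>l\<close>, and by linearity the average objective is determined by these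
  entry averages. Swapping two columns within one row permutes the matrices whose rows each
  contain a single 1, so all entries of a row have the same average; since each row sums to 1,
  that average is \<open>1/s\<close> for \<open>s\<close> columns. Transposition gives the analogous value for matrices
  whose columns each contain a single 1.\<close>

lemma average_add: "average S (\<lambda>p. f p + g p) = average S f + average S g"
  by (simp add: average_def sum.distrib add_divide_distrib)

lemma average_sum: "average S (\<lambda>p. \<Sum>i\<in>I. f i p) = (\<Sum>i\<in>I. average S (f i))"
  by (simp add: average_def sum.swap[of _ I] sum_divide_distrib)

lemma average_scale: "average S (\<lambda>p. c * f p) = c * average S f"
  by (simp add: average_def sum_distrib_left)

lemma average_const:
  assumes "finite S" "S \<noteq> {}"
  shows "average S (\<lambda>_. c) = c"
  using assms by (simp add: average_def)

text \<open>No finiteness is needed: the sum and the cardinality of an infinite set are both 0.\<close>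

lemma average_product:
  "average (A \<times> B) (\<lambda>p. f (fst p) * g (snd p)) = average A f * average B g"
proof -
  have "(\<Sum>p\<in>A \<times> B. f (fst p) * g (snd p)) = (\<Sum>x\<in>A. f x) * (\<Sum>y\<in>B. g y)"
    by (simp add: sum.cartesian_product case_prod_unfold sum_product)
  then show ?thesis
    by (simp add: average_def card_cartesian_product)
qed

lemma average_product_fst:
  assumes "finite B" "B \<noteq> {}"
  shows "average (A \<times> B) (\<lambda>p. f (fst p)) = average A f"
  using average_product[of A B f "\<lambda>_. 1"] assms by (simp add: average_const)

lemma average_product_snd:
  assumes "finite A" "A \<noteq> {}"
  shows "average (A \<times> B) (\<lambda>p. g (snd p)) = average B g"
  using average_product[of A B "\<lambda>_. 1" g] assms by (simp add: average_const)

lemma average_bilinear_objective: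
  fixes A B :: "('a \<Rightarrow> 'b \<Rightarrow> real) set"
  assumes "finite A" "A \<noteq> {}" "finite B" "B \<noteq> {}"
    and "\<And>i j. i \<in> I \<Longrightarrow> j \<in> J \<Longrightarrow> average A (\<lambda>x. x i j) = \<alpha>"
    and "\<And>k l. k \<in> K \<Longrightarrow> l \<in> L \<Longrightarrow> average B (\<lambda>y. y k l) = \<beta>"
  shows "average (A \<times> B) (\<lambda>(x, y). (\<Sum>i\<in>I. \<Sum>j\<in>J. \<Sum>k\<in>K. \<Sum>l\<in>L. q i j k l * x i j * y k l)
          + (\<Sum>i\<in>I. \<Sum>j\<in>J. c i j * x i j) + (\<Sum>k\<in>K. \<Sum>l\<in>L. d k l * y k l))
       = \<alpha> * \<beta> * (\<Sum>i\<in>I. \<Sum>j\<in>J. \<Sum>k\<in>K. \<Sum>l\<in>L. q i j k l)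
         + \<alpha> * (\<Sum>i\<in>I. \<Sum>j\<in>J. c i j) + \<beta> * (\<Sum>k\<in>K. \<Sum>l\<in>L. d k l)"
proof -
  have entries:
    "average (A \<times> B) (\<lambda>p. fst p i j * snd p k l) = average A (\<lambda>x. x i j) * average B (\<lambda>y. y k l)"
    "average (A \<times> B) (\<lambda>p. fst p i j) = average A (\<lambda>x. x i j)"
    "average (A \<times> B) (\<lambda>p. snd p k l) = average B (\<lambda>y. y k l)" for i j k l
    using average_product[of A B "\<lambda>x. x i j" "\<lambda>y. y k l"]
      average_product_fst[of B A "\<lambda>x. x i j"] average_product_snd[of A B "\<lambda>y. y k l"] assms
    by simp_all
  have "average (A \<times> B) (\<lambda>(x, y). (\<Sum>i\<in>I. \<Sum>j\<in>J. \<Sum>k\<in>K. \<Sum>l\<in>L. q i j k l * x i j * y k l)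
          + (\<Sum>i\<in>I. \<Sum>j\<in>J. c i j * x i j) + (\<Sum>k\<in>K. \<Sum>l\<in>L. d k l * y k l))
     = (\<Sum>i\<in>I. \<Sum>j\<in>J. \<Sum>k\<in>K. \<Sum>l\<in>L. q i j k l * (\<alpha> * \<beta>))
       + (\<Sum>i\<in>I. \<Sum>j\<in>J. c i j * \<alpha>) + (\<Sum>k\<in>K. \<Sum>l\<in>L. d k l * \<beta>)"
    using entries assms
    by (simp add: case_prod_unfold average_add average_sum mult.assoc average_scale)
  then show ?thesis
    by (simp add: sum_distrib_left mult_ac)
qed

definition row_assignments :: "nat \<Rightarrow> nat \<Rightarrow> (nat \<Rightarrow> nat \<Rightarrow> real) set" where
  "row_assignments r s = {x. zero_one_matrix r s x \<and> (\<forall>i\<in>{1..r}. (\<Sum>j=1..s. x i j) = 1)}"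

definition column_assignments :: "nat \<Rightarrow> nat \<Rightarrow> (nat \<Rightarrow> nat \<Rightarrow> real) set" where
  "column_assignments r s = {y. zero_one_matrix r s y \<and> (\<forall>j\<in>{1..s}. (\<Sum>i=1..r. y i j) = 1)}"

lemma finite_zero_one_matrices: "finite {x. zero_one_matrix r s x}"
proof (rule inj_on_finite)
  show "inj_on (\<lambda>x. {(i, j). x i j = 1}) {x. zero_one_matrix r s x}"
  proof (intro inj_onI ext)
    fix x y i j
    assume "x \<in> {x. zero_one_matrix r s x}" "y \<in> {x. zero_one_matrix r s x}"
      and ones: "{(i, j). x i j = 1} = {(i, j). y i j = 1}"
    then have "x i j \<in> {0, 1}" "y i j \<in> {0, 1}"
      unfolding zero_one_matrix_def mem_Collect_eq by blast+
    moreover have "x i j = 1 \<longleftrightarrow> y i j = 1"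
      using ones by (simp add: set_eq_iff)
    ultimately show "x i j = y i j" by auto
  qed
  have "{(i, j). x i j = 1} \<subseteq> {1..r} \<times> {1..s}" if "zero_one_matrix r s x" for x
  proof (clarify)
    fix i j assume "x i j = 1"
    then show "i \<in> {1..r} \<and> j \<in> {1..s}"
      using that unfolding zero_one_matrix_def by (metis one_neq_zero)
  qed
  then show "(\<lambda>x. {(i, j). x i j = 1}) ` {x. zero_one_matrix r s x} \<subseteq> Pow ({1..r} \<times> {1..s})"
    by blast
qed simp

lemma finite_row_assignments: "finite (row_assignments r s)"
  by (rule finite_subset[OF _ finite_zero_one_matrices]) (auto simp: row_assignments_def)

lemma row_assignments_nonempty:
  assumes "s \<ge> 1"
  shows "row_assignments r s \<noteq> {}"
proof -
  let ?x = "\<lambda>i j. if i \<in> {1..r} \<and> j = 1 then 1 else 0 :: real"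
  have "(\<Sum>j=1..s. ?x i j) = 1" if "i \<in> {1..r}" for i
    using that assms by simp
  then have "?x \<in> row_assignments r s"
    using assms by (simp add: row_assignments_def zero_one_matrix_def)
  then show ?thesis by blast
qed

definition swap_columns_in_row :: "nat \<Rightarrow> nat \<Rightarrow> nat \<Rightarrow> (nat \<Rightarrow> nat \<Rightarrow> 'a) \<Rightarrow> nat \<Rightarrow> nat \<Rightarrow> 'a"
  where "swap_columns_in_row i a b x = x(i := x i \<circ> transpose a b)"

lemma swap_columns_in_row_involutory [simp]:
  "swap_columns_in_row i a b (swap_columns_in_row i a b x) = x"
  by (simp add: swap_columns_in_row_def fun_eq_iff)

lemma swap_columns_in_row_mem:
  assumes "a \<in> {1..s}" "b \<in> {1..s}" "x \<in> row_assignments r s"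
  shows "swap_columns_in_row i a b x \<in> row_assignments r s"
proof -
  let ?x' = "swap_columns_in_row i a b x"
  have x: "x p q \<in> {0, 1}" "p \<notin> {1..r} \<or> q \<notin> {1..s} \<Longrightarrow> x p q = 0"
    "p \<in> {1..r} \<Longrightarrow> (\<Sum>j=1..s. x p j) = 1" for p q
    using assms(3) by (auto simp: row_assignments_def zero_one_matrix_def)
  have fixed: "transpose a b q = q" if "q \<notin> {1..s}" for q
    using assms(1,2) that by (auto simp: transpose_def)
  have "(\<Sum>j=1..s. x i (transpose a b j)) = (\<Sum>j=1..s. x i j)"
    using sum.reindex_bij_betw[of "transpose a b" "{1..s}" "{1..s}" "x i"] assms(1,2) by simp
  then have sums: "(\<Sum>j=1..s. ?x' p j) = (\<Sum>j=1..s. x p j)" for p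
    by (simp add: swap_columns_in_row_def)
  have "?x' p q \<in> {0, 1}" for p q
    using x(1) by (simp add: swap_columns_in_row_def)
  moreover have "?x' p q = 0" if "p \<notin> {1..r} \<or> q \<notin> {1..s}" for p q
    using that x(2) fixed by (cases "p = i") (auto simp: swap_columns_in_row_def)
  ultimately show ?thesis
    using x(3) unfolding row_assignments_def zero_one_matrix_def mem_Collect_eq sums by blast
qed

lemma average_row_assignments_entry:
  assumes "i \<in> {1..r}" "j \<in> {1..s}"
  shows "average (row_assignments r s) (\<lambda>x. x i j) = 1 / real s"
proof -
  let ?R = "row_assignments r s"
  have same: "(\<Sum>x\<in>?R. x i a) = (\<Sum>x\<in>?R. x i j)" if "a \<in> {1..s}" for a
  proof -
    have "bij_betw (swap_columns_in_row i a j) ?R ?R"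
      by (rule bij_betw_byWitness[where f' = "swap_columns_in_row i a j"])
        (auto simp: swap_columns_in_row_mem[OF that assms(2)])
    from sum.reindex_bij_betw[OF this, of "\<lambda>x. x i j"] show ?thesis
      by (simp add: swap_columns_in_row_def)
  qed
  have "real (card ?R) = (\<Sum>x\<in>?R. \<Sum>a=1..s. x i a)"
    using assms(1) by (simp add: row_assignments_def)
  also have "\<dots> = (\<Sum>a=1..s. \<Sum>x\<in>?R. x i a)"
    by (rule sum.swap)
  also have "\<dots> = real s * (\<Sum>x\<in>?R. x i j)"
    using same by simp
  finally have "(\<Sum>x\<in>?R. x i j) = real (card ?R) / real s"
    using assms(2) by (simp add: field_simps)
  moreover have "card ?R > 0"
    using finite_row_assignments row_assignments_nonempty assms(2) by (simp add: card_gt_0_iff)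
  ultimately show ?thesis
    by (simp add: average_def)
qed

definition transpose_matrix :: "(nat \<Rightarrow> nat \<Rightarrow> 'a) \<Rightarrow> nat \<Rightarrow> nat \<Rightarrow> 'a" where
  "transpose_matrix x = (\<lambda>i j. x j i)"

lemma transpose_matrix_involutory [simp]: "transpose_matrix (transpose_matrix x) = x"
  by (simp add: transpose_matrix_def)

lemma inj_transpose_matrix: "inj transpose_matrix"
  by (metis injI transpose_matrix_involutory)

lemma transpose_matrix_column_assignments:
  "transpose_matrix ` column_assignments r s = row_assignments s r"
proof -
  have "transpose_matrix y \<in> row_assignments s r \<longleftrightarrow> y \<in> column_assignments r s" for y
    by (auto simp: transpose_matrix_def row_assignments_def column_assignments_def
        zero_one_matrix_def)
  then show ?thesis
    by (metis (no_types, lifting) rev_image_eqI image_subset_iff subsetI subset_antisym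
        transpose_matrix_involutory)
qed

lemma finite_column_assignments: "finite (column_assignments r s)"
  using finite_row_assignments[of s r] transpose_matrix_column_assignments[of r s]
  by (metis finite_imageD inj_on_subset inj_transpose_matrix subset_UNIV)

lemma column_assignments_nonempty:
  assumes "r \<ge> 1"
  shows "column_assignments r s \<noteq> {}"
  using row_assignments_nonempty[OF assms, of s] transpose_matrix_column_assignments[of r s]
  by auto

lemma average_column_assignments_entry:
  assumes "i \<in> {1..r}" "j \<in> {1..s}"
  shows "average (column_assignments r s) (\<lambda>y. y i j) = 1 / real r"
proof -
  have inj: "inj_on transpose_matrix (column_assignments r s)"
    using inj_transpose_matrix by (rule inj_on_subset) simp
  have "average (column_assignments r s) (\<lambda>y. y i j)
      = average (transpose_matrix ` column_assignments r s) (\<lambda>x. x j i)"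
    unfolding average_def sum.reindex[OF inj] card_image[OF inj]
    by (simp add: transpose_matrix_def)
  then show ?thesis
    using average_row_assignments_entry[OF assms(2,1)] transpose_matrix_column_assignments
    by simp
qed

theorem theorem1:
  fixes m n :: nat
    and q :: "nat \<Rightarrow> nat \<Rightarrow> nat \<Rightarrow> nat \<Rightarrow> real"
    and c d :: "nat \<Rightarrow> nat \<Rightarrow> real"
  assumes "m \<ge> 1" and "n \<ge> 1"
  shows "(average (bqap1_feasible m n) (\<lambda>(x, y). bqap1_obj m n q c d x y) =
           (\<Sum>i=1..m. \<Sum>j=1..n. \<Sum>k=1..m. \<Sum>l=1..n. q i j k l) / (real m * real n)
         + (\<Sum>i=1..m. \<Sum>j=1..n. c i j) / real n
         + (\<Sum>i=1..m. \<Sum>j=1..n. d i j) / real m)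
    \<and> (average (bqap2_feasible m n) (\<lambda>(x, y). bqap2_obj m n q c d x y) =
           (\<Sum>i=1..m. \<Sum>j=1..m. \<Sum>k=1..n. \<Sum>l=1..n. q i j k l) / (real m * real n)
         + (\<Sum>i=1..m. \<Sum>j=1..m. c i j) / real m
         + (\<Sum>i=1..n. \<Sum>j=1..n. d i j) / real n)"
proof -
  have feasible1: "bqap1_feasible m n = row_assignments m n \<times> column_assignments m n"
    by (auto simp: bqap1_feasible_def row_assignments_def column_assignments_def)
  have feasible2: "bqap2_feasible m n = row_assignments m m \<times> column_assignments n n"
    by (auto simp: bqap2_feasible_def row_assignments_def column_assignments_def)
  have obj1: "bqap1_obj m n q c d x y =
      (\<Sum>i=1..m. \<Sum>j=1..n. \<Sum>k=1..m. \<Sum>l=1..n. q i j k l * x i j * y k l)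
      + (\<Sum>i=1..m. \<Sum>j=1..n. c i j * x i j) + (\<Sum>k=1..m. \<Sum>l=1..n. d k l * y k l)" for x y
    unfolding bqap1_obj_def by (simp only: sum.swap[of _ "{1..m}" "{1..n}"])
  note average_objective = average_bilinear_objective[OF finite_row_assignments
      row_assignments_nonempty finite_column_assignments column_assignments_nonempty
      average_row_assignments_entry average_column_assignments_entry]
  have average1: "average (bqap1_feasible m n) (\<lambda>(x, y). bqap1_obj m n q c d x y)
     = 1 / real n * (1 / real m) * (\<Sum>i=1..m. \<Sum>j=1..n. \<Sum>k=1..m. \<Sum>l=1..n. q i j k l)
       + 1 / real n * (\<Sum>i=1..m. \<Sum>j=1..n. c i j) + 1 / real m * (\<Sum>i=1..m. \<Sum>j=1..n. d i j)"
    unfolding feasible1 obj1 by (rule average_objective) (use assms in auto)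
  have average2: "average (bqap2_feasible m n) (\<lambda>(x, y). bqap2_obj m n q c d x y)
     = 1 / real m * (1 / real n) * (\<Sum>i=1..m. \<Sum>j=1..m. \<Sum>k=1..n. \<Sum>l=1..n. q i j k l)
       + 1 / real m * (\<Sum>i=1..m. \<Sum>j=1..m. c i j) + 1 / real n * (\<Sum>i=1..n. \<Sum>j=1..n. d i j)"
    unfolding feasible2 bqap2_obj_def by (rule average_objective) (use assms in auto)
  show ?thesis
    unfolding average1 average2 by (simp add: field_simps)
qed

end
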